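(* Let $G$ and $G_0$ be connected graphs such that $G$ is a cactus and $G_0$ is a subgraph of $G$ that is either a cactus or a cycle. Then there exist sequences $(P_1,\dots,P_r)$ and $(G_0,G_1,\dots,G_r)$ of subgraphs of $G$ ($r\ge 0$, with $r=0$ iff $G=G_0$) such that $G_r=G$, every $G_i$ with $i\ge1$ is a cactus, and for every $i\in\{1,\dots,r\}$: $G_i=G_{i-1}\cup P_i$ with $E(P_i)\cap E(G_{i-1})=\emptyset$, where $P_i$ is a path, a cycle, or a lollipop, and (p) if $P_i$ is a path then $V(G_{i-1})\cap V(P_i)=End(P_i)$; (l) if $P_i$ is a lollipop then $V(G_{i-1})\cap V(P_i)=End(P_i)$; (c) if $P_i$ is a cycle then $|V(G_{i-1})\cap V(P_i)|=1$. Consequently $G_{i-1}$ is a proper subgraph of $G_i$ and $\Delta G_i-\Delta G_{i-1}=1$ for all $i$.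
   Context: Graphs are finite, may have loops and parallel edges, and have no isolated vertices unless stated otherwise. A leaf is a vertex incident to exactly one edge, which is not a loop. $\Delta G=|E(G)|-|V(G)|$. A cycle is a connected graph all of whose vertices have degree 2 (a loop contributes 2; a single vertex with a loop is a cycle). An $(x,y)$-path is a path with distinct end vertices $x,y$ and at least one edge, and $End(P)=\{x,y\}$. A lollipop is a graph obtained from a cycle $C$ (possibly a loop) and a vertex-disjoint path $P$ with end vertices $y,x$ by identifying a vertex of $C$ with $y$; its end-vertex is $x$, and $End(Q)=\{x\}$. A cacti-graph is a graph with no isolated vertices, no leaves, and no component that is a cycle (equivalently, no isolated vertices, no leaves, and every component contains at least two cycles). A cactus is a connected cacti-graph (this is not the standard meaning of "cactus"). *)

theory Defs
  imports Main
begin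

text \<open>Multigraphs with loops and parallel edges. Edges carry identities of type 'e and
  a global incidence map inc :: 'e => 'v set assigns to each edge its set of end vertices
  (one vertex for a loop, two for a non-loop edge). Subgraphs share edge identities with the host graph.\<close>

type_synonym ('v,'e) graph = "'v set \<times> 'e set"

definition verts :: "('v,'e) graph \<Rightarrow> 'v set" where "verts G = fst G"
definition edges :: "('v,'e) graph \<Rightarrow> 'e set" where "edges G = snd G"

definition is_graph :: "('e \<Rightarrow> 'v set) \<Rightarrow> ('v,'e) graph \<Rightarrow> bool" where
  "is_graph inc G \<longleftrightarrow> finite (verts G) \<and> finite (edges G) \<and>
     (\<forall>e\<in>edges G. inc e \<subseteq> verts G \<and> (card (inc e) = 1 \<or> card (inc e) = 2))"

definition is_loop :: "('e \<Rightarrow> 'v set) \<Rightarrow> 'e \<Rightarrow> bool" where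
  "is_loop inc e \<longleftrightarrow> card (inc e) = 1"

definition subgraph :: "('e \<Rightarrow> 'v set) \<Rightarrow> ('v,'e) graph \<Rightarrow> ('v,'e) graph \<Rightarrow> bool" where
  "subgraph inc H G \<longleftrightarrow> is_graph inc H \<and> is_graph inc G \<and>
     verts H \<subseteq> verts G \<and> edges H \<subseteq> edges G"

definition proper_subgraph :: "('e \<Rightarrow> 'v set) \<Rightarrow> ('v,'e) graph \<Rightarrow> ('v,'e) graph \<Rightarrow> bool" where
  "proper_subgraph inc H G \<longleftrightarrow> subgraph inc H G \<and> H \<noteq> G"

definition graph_union :: "('v,'e) graph \<Rightarrow> ('v,'e) graph \<Rightarrow> ('v,'e) graph" where
  "graph_union G H = (verts G \<union> verts H, edges G \<union> edges H)"

definition degree :: "('e \<Rightarrow> 'v set) \<Rightarrow> ('v,'e) graph \<Rightarrow> 'v \<Rightarrow> nat" where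
  "degree inc G v = card {e\<in>edges G. v \<in> inc e \<and> \<not> is_loop inc e}
                    + 2 * card {e\<in>edges G. inc e = {v}}"

definition isolated :: "('e \<Rightarrow> 'v set) \<Rightarrow> ('v,'e) graph \<Rightarrow> 'v \<Rightarrow> bool" where
  "isolated inc G v \<longleftrightarrow> v \<in> verts G \<and> (\<forall>e\<in>edges G. v \<notin> inc e)"

definition is_leaf :: "('e \<Rightarrow> 'v set) \<Rightarrow> ('v,'e) graph \<Rightarrow> 'v \<Rightarrow> bool" where
  "is_leaf inc G v \<longleftrightarrow> v \<in> verts G \<and>
     (\<exists>e. {f\<in>edges G. v \<in> inc f} = {e} \<and> \<not> is_loop inc e)"

definition adj :: "('e \<Rightarrow> 'v set) \<Rightarrow> ('v,'e) graph \<Rightarrow> ('v \<times> 'v) set" where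
  "adj inc G = {(u,v). \<exists>e\<in>edges G. inc e = {u,v}}"

definition reach :: "('e \<Rightarrow> 'v set) \<Rightarrow> ('v,'e) graph \<Rightarrow> 'v \<Rightarrow> 'v \<Rightarrow> bool" where
  "reach inc G u v \<longleftrightarrow> (u, v) \<in> (adj inc G)\<^sup>*"

definition connected :: "('e \<Rightarrow> 'v set) \<Rightarrow> ('v,'e) graph \<Rightarrow> bool" where
  "connected inc G \<longleftrightarrow> verts G \<noteq> {} \<and> (\<forall>u\<in>verts G. \<forall>v\<in>verts G. reach inc G u v)"

definition component :: "('e \<Rightarrow> 'v set) \<Rightarrow> ('v,'e) graph \<Rightarrow> ('v,'e) graph \<Rightarrow> bool" where
  "component inc G H \<longleftrightarrow> (\<exists>v\<in>verts G. verts H = {u\<in>verts G. reach inc G v u} \<and>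
      edges H = {e\<in>edges G. inc e \<subseteq> verts H})"

definition is_cycle :: "('e \<Rightarrow> 'v set) \<Rightarrow> ('v,'e) graph \<Rightarrow> bool" where
  "is_cycle inc G \<longleftrightarrow> is_graph inc G \<and> connected inc G \<and> (\<forall>v\<in>verts G. degree inc G v = 2)"

definition is_path :: "('e \<Rightarrow> 'v set) \<Rightarrow> ('v,'e) graph \<Rightarrow> 'v \<Rightarrow> 'v \<Rightarrow> bool" where
  "is_path inc G x y \<longleftrightarrow> is_graph inc G \<and>
     (\<exists>vs es. distinct vs \<and> distinct es \<and> length es \<ge> 1 \<and> length vs = length es + 1 \<and>
        hd vs = x \<and> last vs = y \<and>
        (\<forall>i<length es. inc (es ! i) = {vs ! i, vs ! Suc i}) \<and>
        verts G = set vs \<and> edges G = set es)"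

definition is_path_graph :: "('e \<Rightarrow> 'v set) \<Rightarrow> ('v,'e) graph \<Rightarrow> bool" where
  "is_path_graph inc G \<longleftrightarrow> (\<exists>x y. is_path inc G x y)"

definition is_lollipop :: "('e \<Rightarrow> 'v set) \<Rightarrow> ('v,'e) graph \<Rightarrow> 'v \<Rightarrow> bool" where
  "is_lollipop inc G x \<longleftrightarrow> (\<exists>C P y. is_cycle inc C \<and> is_path inc P y x \<and>
     verts C \<inter> verts P = {y} \<and> edges C \<inter> edges P = {} \<and> G = graph_union C P)"

definition is_lollipop_graph :: "('e \<Rightarrow> 'v set) \<Rightarrow> ('v,'e) graph \<Rightarrow> bool" where
  "is_lollipop_graph inc G \<longleftrightarrow> (\<exists>x. is_lollipop inc G x)"

definition cacti_graph :: "('e \<Rightarrow> 'v set) \<Rightarrow> ('v,'e) graph \<Rightarrow> bool" where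
  "cacti_graph inc G \<longleftrightarrow> is_graph inc G \<and>
     (\<forall>v\<in>verts G. \<not> isolated inc G v) \<and> (\<forall>v\<in>verts G. \<not> is_leaf inc G v) \<and>
     (\<forall>H. component inc G H \<longrightarrow> \<not> is_cycle inc H)"

definition cactus :: "('e \<Rightarrow> 'v set) \<Rightarrow> ('v,'e) graph \<Rightarrow> bool" where
  "cactus inc G \<longleftrightarrow> connected inc G \<and> cacti_graph inc G"

definition excess :: "('v,'e) graph \<Rightarrow> int" where
  "excess G = int (card (edges G)) - int (card (verts G))"

end

theory Submission
  imports Defs
begin

text \<open>A graph without isolated vertices and leaves has all degrees at least two, so by the
  handshake lemma it has at least as many edges as vertices, with equality for cycles; hence a
  cactus has nonnegative excess. Call a path, cycle or lollipop P, edge-disjoint from a connected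
  subgraph H and meeting it exactly in its end vertices (a single vertex for a cycle), an ear of H.
  Adding an ear raises the excess by exactly one, keeps the union connected and all of its degrees at
  least two, and the union cannot be a cycle because its excess is positive: it is a cactus.

  If H is a proper connected subgraph of the cactus G, an ear exists: either an edge outside H has
  both ends in H, or an edge leaves H and we walk on through vertices outside H. Since every vertex of
  G has degree at least two, the free end w of the walk has a second edge wt. If t is the vertex
  where the walk left H, this closes a cycle; if t is another walk vertex, we get a lollipop ending
  in H; if t lies in H, a path; otherwise the walk grows, which can happen only finitely often.
  Induction on the number of edges of G outside H then gives the ear decomposition.\<close>

lemma verts_pair [simp]: "verts (V, E) = V"
  by (simp add: verts_def)
lemma edges_pair [simp]: "edges (V, E) = E"
  by (simp add: edges_def)

lemma graph_eqI: "verts G = verts H \<Longrightarrow> edges G = edges H \<Longrightarrow> G = H"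
  by (simp add: verts_def edges_def prod_eq_iff)

lemma verts_graph_union [simp]: "verts (graph_union G H) = verts G \<union> verts H"
  by (simp add: graph_union_def)

lemma edges_graph_union [simp]: "edges (graph_union G H) = edges G \<union> edges H"
  by (simp add: graph_union_def)

lemma is_graph_union: "is_graph inc G \<Longrightarrow> is_graph inc H \<Longrightarrow> is_graph inc (graph_union G H)"
  unfolding is_graph_def by auto

lemma incidence_two_ends:
  assumes "is_graph inc G" "e \<in> edges G" "w \<in> inc e"
  obtains t where "inc e = {w, t}"
proof -
  have "card (inc e) = 1 \<or> card (inc e) = 2" using assms(1,2) unfolding is_graph_def by auto
  then consider a where "inc e = {a}" | a b where "inc e = {a, b}"
    by (auto simp: card_1_singleton_iff card_2_iff)
  then show thesis using assms(3) that by cases (auto simp: insert_commute)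
qed

section \<open>Vertices of degree at least two\<close>

definition nonpendant :: "('e \<Rightarrow> 'v set) \<Rightarrow> ('v,'e) graph \<Rightarrow> 'v \<Rightarrow> bool" where
  "nonpendant inc H v \<longleftrightarrow> (\<exists>e\<in>edges H. v \<in> inc e) \<and>
     \<not> (\<exists>e. {f\<in>edges H. v \<in> inc f} = {e} \<and> \<not> is_loop inc e)"

lemma nonpendant_iff:
  "v \<in> verts H \<Longrightarrow> nonpendant inc H v \<longleftrightarrow> \<not> isolated inc H v \<and> \<not> is_leaf inc H v"
  unfolding nonpendant_def isolated_def is_leaf_def by blast

lemma nonpendant_not_leaf: "nonpendant inc H v \<Longrightarrow> \<not> is_leaf inc H v"
  unfolding nonpendant_def is_leaf_def by blast

lemma nonpendant_if_two_edges:
  "e1 \<in> edges H \<Longrightarrow> e2 \<in> edges H \<Longrightarrow> e1 \<noteq> e2 \<Longrightarrow> v \<in> inc e1 \<Longrightarrow> v \<in> inc e2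
    \<Longrightarrow> nonpendant inc H v"
  unfolding nonpendant_def by (metis (mono_tags, lifting) mem_Collect_eq singletonD)

lemma nonpendant_mono:
  assumes "nonpendant inc H v" "edges H \<subseteq> edges H'"
  shows "nonpendant inc H' v"
proof -
  obtain e where e: "e \<in> edges H" "v \<in> inc e" using assms(1) unfolding nonpendant_def by blast
  have "\<not> ({f\<in>edges H'. v \<in> inc f} = {e'} \<and> \<not> is_loop inc e')" for e'
  proof
    assume "{f\<in>edges H'. v \<in> inc f} = {e'} \<and> \<not> is_loop inc e'"
    then have "{f\<in>edges H. v \<in> inc f} = {e'}" "\<not> is_loop inc e'" using e assms(2) by auto
    then show False using assms(1) unfolding nonpendant_def by blast
  qed
  then show ?thesis unfolding nonpendant_def using e assms(2) by blast
qed

lemma degree_ge_2_if_nonpendant: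
  assumes np: "nonpendant inc H v" and "finite (edges H)"
  shows "2 \<le> degree inc H v"
proof (cases "\<exists>e\<in>edges H. inc e = {v}")
  case True
  then have "card {e\<in>edges H. inc e = {v}} \<ge> 1" using assms
    by (metis (mono_tags, lifting) One_nat_def Suc_leI card_gt_0_iff empty_iff finite_subset
        mem_Collect_eq subsetI)
  then show ?thesis unfolding degree_def by simp
next
  case False
  let ?A = "{e\<in>edges H. v \<in> inc e \<and> \<not> is_loop inc e}"
  have "?A = {e\<in>edges H. v \<in> inc e}"
    using False unfolding is_loop_def by (force simp: card_1_singleton_iff)
  then have "?A \<noteq> {}" "\<nexists>e. ?A = {e}" using np unfolding nonpendant_def by force+
  moreover have "finite ?A" using assms by simp
  ultimately have "card ?A \<noteq> 0" "card ?A \<noteq> 1" by (auto simp: card_1_singleton_iff)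
  then show ?thesis unfolding degree_def by linarith
qed

lemma nonpendant_if_degree_ge_2:
  assumes deg: "2 \<le> degree inc H v"
  shows "nonpendant inc H v"
proof (rule ccontr)
  assume "\<not> nonpendant inc H v"
  then consider "\<forall>e\<in>edges H. v \<notin> inc e"
    | e where "{f\<in>edges H. v \<in> inc f} = {e}" "\<not> is_loop inc e"
    unfolding nonpendant_def by blast
  then have "degree inc H v \<le> 1"
  proof cases
    case 1
    then have "{f\<in>edges H. v \<in> inc f \<and> \<not> is_loop inc f} = {}"
      "{f\<in>edges H. inc f = {v}} = {}" by auto
    then show ?thesis unfolding degree_def by (simp only: card.empty)
  next
    case 2
    then have "{f\<in>edges H. v \<in> inc f \<and> \<not> is_loop inc f} = {e}" by blast
    moreover have "{f\<in>edges H. inc f = {v}} = {}"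
    proof -
      have "f = e" if "f \<in> edges H" "inc f = {v}" for f using 2(1) that by blast
      then show ?thesis using 2(2) unfolding is_loop_def by fastforce
    qed
    ultimately show ?thesis unfolding degree_def by (simp only: card.empty) simp
  qed
  then show False using deg by simp
qed

lemma nonpendant_iff_degree:
  "finite (edges H) \<Longrightarrow> nonpendant inc H v \<longleftrightarrow> 2 \<le> degree inc H v"
  using degree_ge_2_if_nonpendant[of inc H v] nonpendant_if_degree_ge_2[of inc H v] by blast

lemma nonpendant_other_edge:
  assumes "nonpendant inc G w" "e \<in> edges G" "w \<in> inc e" "\<not> is_loop inc e"
  obtains f where "f \<in> edges G" "f \<noteq> e" "w \<in> inc f"
proof -
  have "{f\<in>edges G. w \<in> inc f} \<noteq> {e}" using assms(1,4) unfolding nonpendant_def by blast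
  then show thesis using assms(2,3) that by blast
qed

lemma cycle_nonpendant: "is_cycle inc H \<Longrightarrow> v \<in> verts H \<Longrightarrow> nonpendant inc H v"
  unfolding is_cycle_def by (auto simp: nonpendant_iff_degree is_graph_def)

lemma cactus_nonpendant: "cactus inc G \<Longrightarrow> v \<in> verts G \<Longrightarrow> nonpendant inc G v"
  unfolding cactus_def cacti_graph_def by (simp add: nonpendant_iff)

lemma double_count:
  assumes "finite A" "finite B"
  shows "(\<Sum>a\<in>A. card {b\<in>B. R a b}) = (\<Sum>b\<in>B. card {a\<in>A. R a b})"
proof -
  have "\<And>a. card {b\<in>B. R a b} = (\<Sum>b\<in>B. if R a b then 1 else 0)"
       "\<And>b. card {a\<in>A. R a b} = (\<Sum>a\<in>A. if R a b then 1 else 0)"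
    using assms by (simp_all add: sum.If_cases Int_def)
  then show ?thesis by (simp only: sum.swap[of _ A B])
qed

lemma sum_nonloop_incidences:
  assumes g: "is_graph inc H"
  shows "(\<Sum>v\<in>verts H. card {e\<in>edges H. v \<in> inc e \<and> \<not> is_loop inc e})
    = 2 * card {e\<in>edges H. \<not> is_loop inc e}"
proof -
  let ?V = "verts H" and ?E = "edges H"
  have fV: "finite ?V" and fE: "finite ?E" using g unfolding is_graph_def by auto
  have ends: "inc e \<subseteq> ?V" "card (inc e) = 1 \<or> card (inc e) = 2" if "e \<in> ?E" for e
    using g that unfolding is_graph_def by auto
  have "(\<Sum>v\<in>?V. card {e\<in>?E. v \<in> inc e \<and> \<not> is_loop inc e})
      = (\<Sum>e\<in>?E. card {v\<in>?V. v \<in> inc e \<and> \<not> is_loop inc e})"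
    by (rule double_count[OF fV fE])
  also have "\<dots> = (\<Sum>e\<in>?E. if is_loop inc e then 0 else 2)"
  proof (rule sum.cong[OF refl])
    fix e assume "e \<in> ?E"
    then have "\<not> is_loop inc e \<Longrightarrow> {v\<in>?V. v \<in> inc e \<and> \<not> is_loop inc e} = inc e" using ends by auto
    then show "card {v\<in>?V. v \<in> inc e \<and> \<not> is_loop inc e} = (if is_loop inc e then 0 else 2)"
      using ends \<open>e \<in> ?E\<close> unfolding is_loop_def by auto
  qed
  also have "\<dots> = 2 * card {e\<in>?E. \<not> is_loop inc e}" using fE by (simp add: sum.If_cases Int_def)
  finally show ?thesis .
qed

lemma sum_loop_incidences:
  assumes g: "is_graph inc H"
  shows "(\<Sum>v\<in>verts H. card {e\<in>edges H. inc e = {v}}) = card {e\<in>edges H. is_loop inc e}"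
proof -
  let ?V = "verts H" and ?E = "edges H"
  have fV: "finite ?V" and fE: "finite ?E" using g unfolding is_graph_def by auto
  have "(\<Sum>v\<in>?V. card {e\<in>?E. inc e = {v}}) = (\<Sum>e\<in>?E. card {v\<in>?V. inc e = {v}})"
    by (rule double_count[OF fV fE])
  also have "\<dots> = (\<Sum>e\<in>?E. if is_loop inc e then 1 else 0)"
  proof (rule sum.cong[OF refl])
    fix e assume "e \<in> ?E"
    show "card {v\<in>?V. inc e = {v}} = (if is_loop inc e then 1 else 0)"
    proof (cases "is_loop inc e")
      case True
      then obtain w where "inc e = {w}" unfolding is_loop_def by (meson card_1_singletonE)
      then have "{v\<in>?V. inc e = {v}} = {w}" using g \<open>e \<in> ?E\<close> unfolding is_graph_def by auto
      then show ?thesis using True by simp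
    next
      case False
      then have "{v\<in>?V. inc e = {v}} = {}" unfolding is_loop_def by auto
      then show ?thesis using False by (simp only: card.empty if_False)
    qed
  qed
  also have "\<dots> = card {e\<in>?E. is_loop inc e}" using fE by (simp add: sum.If_cases Int_def)
  finally show ?thesis .
qed

lemma handshake:
  assumes g: "is_graph inc H"
  shows "(\<Sum>v\<in>verts H. degree inc H v) = 2 * card (edges H)"
proof -
  let ?NL = "{e\<in>edges H. \<not> is_loop inc e}" and ?L = "{e\<in>edges H. is_loop inc e}"
  have "finite (edges H)" using g unfolding is_graph_def by simp
  moreover have "edges H = ?NL \<union> ?L" by auto
  ultimately have "card (edges H) = card ?NL + card ?L"
    using card_Un_disjoint[of ?NL ?L] by (metis (no_types, lifting) disjoint_iff finite_Un mem_Collect_eq)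
  then show ?thesis unfolding degree_def using sum_nonloop_incidences[OF g] sum_loop_incidences[OF g]
    by (simp add: sum.distrib sum_distrib_left[symmetric])
qed

lemma cycle_card: assumes "is_cycle inc H" shows "card (edges H) = card (verts H)"
proof -
  have "(\<Sum>v\<in>verts H. degree inc H v) = (\<Sum>v\<in>verts H. 2)"
    using assms unfolding is_cycle_def by (intro sum.cong) auto
  then show ?thesis using handshake assms unfolding is_cycle_def by fastforce
qed

lemma card_verts_le_card_edges:
  assumes "is_graph inc H" "\<And>v. v \<in> verts H \<Longrightarrow> nonpendant inc H v"
  shows "card (verts H) \<le> card (edges H)"
proof -
  have "finite (edges H)" using assms unfolding is_graph_def by auto
  then have "(\<Sum>v\<in>verts H. 2) \<le> (\<Sum>v\<in>verts H. degree inc H v)"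
    using assms(2) by (intro sum_mono) (simp add: nonpendant_iff_degree)
  then show ?thesis using handshake[OF assms(1)] by simp
qed

section \<open>Chains and paths\<close>

definition chain :: "('e \<Rightarrow> 'v set) \<Rightarrow> 'v list \<Rightarrow> 'e list \<Rightarrow> bool" where
  "chain inc vs es \<longleftrightarrow> length vs = Suc (length es) \<and>
     (\<forall>i<length es. inc (es ! i) = {vs ! i, vs ! Suc i})"

lemma is_path_chain:
  "is_path inc P x y \<longleftrightarrow> is_graph inc P \<and> (\<exists>vs es. distinct vs \<and> distinct es \<and> es \<noteq> [] \<and>
     chain inc vs es \<and> hd vs = x \<and> last vs = y \<and> verts P = set vs \<and> edges P = set es)"
  unfolding is_path_def chain_def
  by (metis One_nat_def Suc_eq_plus1 Suc_le_eq length_greater_0_conv)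

lemma chain_hd_last:
  assumes "chain inc vs es"
  shows "vs \<noteq> []" "hd vs = vs ! 0" "last vs = vs ! length es"
proof -
  have l: "length vs = Suc (length es)" using assms unfolding chain_def by simp
  then show "vs \<noteq> []" by auto
  then show "hd vs = vs ! 0" "last vs = vs ! length es" using l by (simp_all add: hd_conv_nth last_conv_nth)
qed

lemma chain_rev: "chain inc vs es \<Longrightarrow> chain inc (rev vs) (rev es)"
  unfolding chain_def by (auto simp: rev_nth Suc_diff_Suc insert_commute)

lemma chain_is_graph:
  assumes "chain inc vs es"
  shows "is_graph inc (set vs, set es)"
  unfolding is_graph_def
proof (intro conjI ballI)
  fix e assume "e \<in> edges (set vs, set es)"
  then obtain i where i: "i < length es" "e = es ! i" by (auto simp: in_set_conv_nth)
  then have "inc e = {vs ! i, vs ! Suc i}" "Suc i < length vs" using assms unfolding chain_def by auto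
  then show "inc e \<subseteq> verts (set vs, set es)" "card (inc e) = 1 \<or> card (inc e) = 2"
    by (auto simp: card_insert_if)
qed auto

lemma chain_is_path:
  "chain inc vs es \<Longrightarrow> distinct vs \<Longrightarrow> distinct es \<Longrightarrow> es \<noteq> []
    \<Longrightarrow> is_path inc (set vs, set es) (hd vs) (last vs)"
  unfolding is_path_chain using chain_is_graph by fastforce

lemma chain_Cons:
  assumes "chain inc vs es" "inc f = {t, hd vs}"
  shows "chain inc (t # vs) (f # es)"
  using assms chain_hd_last(2)[OF assms(1)] unfolding chain_def by (auto simp: nth_Cons')

lemma chain_take: "chain inc vs es \<Longrightarrow> j \<le> length es \<Longrightarrow> chain inc (take (Suc j) vs) (take j es)"
  unfolding chain_def by auto

lemma chain_drop: "chain inc vs es \<Longrightarrow> j \<le> length es \<Longrightarrow> chain inc (drop j vs) (drop j es)"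
  unfolding chain_def by (auto simp: add.commute Suc_diff_le)

lemma chain_start_edge:
  assumes "chain inc vs es" "distinct vs" "i < length es" "vs ! 0 \<in> inc (es ! i)"
  shows "i = 0"
proof -
  have "length vs = Suc (length es)" "inc (es ! i) = {vs ! i, vs ! Suc i}"
    using assms(1,3) unfolding chain_def by auto
  then show ?thesis using assms(2-4) nth_eq_iff_index_eq[OF assms(2), of 0] by auto
qed

lemma path_is_graph: "is_path inc P x y \<Longrightarrow> is_graph inc P"
  unfolding is_path_def by simp

lemma path_rev: "is_path inc P x y \<Longrightarrow> is_path inc P y x"
  unfolding is_path_chain
  by (smt (verit) chain_rev distinct_rev hd_rev last_rev rev_is_Nil_conv set_rev)

lemma path_card: "is_path inc P x y \<Longrightarrow> card (edges P) + 1 = card (verts P)"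
  unfolding is_path_def by (auto simp: distinct_card)

lemma path_ends:
  assumes "is_path inc P x y"
  shows "x \<noteq> y" "x \<in> verts P" "y \<in> verts P"
proof -
  obtain vs es where d: "distinct vs" "es \<noteq> []" and c: "chain inc vs es"
    and xy: "hd vs = x" "last vs = y" and V: "verts P = set vs"
    using assms unfolding is_path_chain by blast
  have ne: "vs \<noteq> []" by (rule chain_hd_last(1)[OF c])
  show "x \<in> verts P" using V xy(1) hd_in_set[OF ne] by simp
  show "y \<in> verts P" using V xy(2) last_in_set[OF ne] by simp
  have "length vs = Suc (length es)" "0 < length es" using c d(2) unfolding chain_def by auto
  then have "vs ! 0 \<noteq> vs ! length es" using nth_eq_iff_index_eq[OF d(1)] by simp
  then show "x \<noteq> y" using xy chain_hd_last[OF c] by simp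
qed

lemma path_start_leaf:
  assumes "is_path inc P x y"
  shows "is_leaf inc P x"
proof -
  obtain vs es where d: "distinct vs" "es \<noteq> []" and c: "chain inc vs es"
    and x: "hd vs = x" and V: "verts P = set vs" and E: "edges P = set es"
    using assms unfolding is_path_chain by blast
  have x0: "x = vs ! 0" using x chain_hd_last[OF c] by simp
  have e0: "inc (es ! 0) = {vs ! 0, vs ! 1}" "vs ! 0 \<noteq> vs ! 1"
    using c d nth_eq_iff_index_eq[OF d(1), of 0 1] unfolding chain_def by auto
  have "{f \<in> edges P. x \<in> inc f} = {es ! 0}"
  proof (intro equalityI subsetI)
    fix f assume "f \<in> {f \<in> edges P. x \<in> inc f}"
    then obtain i where "i < length es" "f = es ! i" "x \<in> inc f" using E by (auto simp: in_set_conv_nth)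
    then show "f \<in> {es ! 0}" using chain_start_edge[OF c d(1)] x0 by auto
  qed (use E d(2) e0 x0 in auto)
  moreover have "\<not> is_loop inc (es ! 0)" unfolding is_loop_def using e0 by simp
  ultimately show ?thesis unfolding is_leaf_def using x0 V chain_hd_last(1)[OF c] by auto
qed

lemma path_end_leaf: "is_path inc P x y \<Longrightarrow> is_leaf inc P y"
  by (rule path_start_leaf[OF path_rev])

lemma path_inner_nonpendant:
  assumes "is_path inc P x y" "v \<in> verts P" "v \<noteq> x" "v \<noteq> y"
  shows "nonpendant inc P v"
proof -
  obtain vs es where d: "distinct es" and c: "chain inc vs es" and x: "hd vs = x" and y: "last vs = y"
    and V: "verts P = set vs" and E: "edges P = set es"
    using assms(1) unfolding is_path_chain by blast
  have len: "length vs = Suc (length es)" using c unfolding chain_def by simp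
  obtain i where i: "i < length vs" "v = vs ! i" using assms(2) V by (auto simp: in_set_conv_nth)
  have "i \<noteq> 0" "i \<noteq> length es"
    using i assms(3,4) x y chain_hd_last[OF c] by metis+
  then obtain j where j: "i = Suc j" "Suc j < length es" using i len by (cases i) auto
  then have "v \<in> inc (es ! j)" "v \<in> inc (es ! Suc j)" "es ! j \<noteq> es ! Suc j"
    using c d i unfolding chain_def by (auto simp: nth_eq_iff_index_eq)
  then show ?thesis using nonpendant_if_two_edges j E by (metis Suc_lessD nth_mem)
qed

section \<open>Connectivity\<close>

lemma adj_sym: "(u, v) \<in> adj inc H \<Longrightarrow> (v, u) \<in> adj inc H"
  unfolding adj_def by (auto simp: insert_commute)

lemma reach_sym: "reach inc H u v \<Longrightarrow> reach inc H v u"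
  unfolding reach_def
proof (induction rule: rtrancl_induct)
  case (step y z)
  then show ?case by (meson adj_sym converse_rtrancl_into_rtrancl)
qed simp

lemma reach_trans: "reach inc H u v \<Longrightarrow> reach inc H v w \<Longrightarrow> reach inc H u w"
  unfolding reach_def by auto

lemma reach_mono: "reach inc H u v \<Longrightarrow> edges H \<subseteq> edges H' \<Longrightarrow> reach inc H' u v"
proof -
  assume r: "reach inc H u v" and sub: "edges H \<subseteq> edges H'"
  have "adj inc H \<subseteq> adj inc H'" using sub unfolding adj_def by auto
  then show ?thesis using r unfolding reach_def by (meson rtrancl_mono subsetD)
qed

lemma reach_edge: "e \<in> edges H \<Longrightarrow> inc e = {u, v} \<Longrightarrow> reach inc H u v"
  unfolding reach_def adj_def by auto

lemma connectedI_hub: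
  assumes "c \<in> verts H" "\<And>u. u \<in> verts H \<Longrightarrow> reach inc H u c"
  shows "connected inc H"
  unfolding connected_def
proof (intro conjI ballI)
  show "verts H \<noteq> {}" using assms(1) by blast
  fix u v assume "u \<in> verts H" "v \<in> verts H"
  then show "reach inc H u v" using assms(2) reach_sym reach_trans by metis
qed

lemma chain_connected:
  assumes "chain inc vs es" "set es \<subseteq> edges H" "verts H = set vs"
  shows "connected inc H"
proof (rule connectedI_hub)
  show "vs ! 0 \<in> verts H" using assms(3) chain_hd_last[OF assms(1)] by simp
  have from_start: "reach inc H (vs ! 0) (vs ! i)" if "i < length vs" for i
    using that
  proof (induction i)
    case (Suc i)
    then have "es ! i \<in> edges H" "inc (es ! i) = {vs ! i, vs ! Suc i}"
      using assms(1,2) unfolding chain_def by auto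
    then have "reach inc H (vs ! i) (vs ! Suc i)" by (rule reach_edge)
    with Suc show ?case by (meson Suc_lessD reach_trans)
  qed (simp add: reach_def)
  fix u assume "u \<in> verts H"
  then obtain i where "i < length vs" "u = vs ! i" using assms(3) by (auto simp: in_set_conv_nth)
  then show "reach inc H u (vs ! 0)" using reach_sym[OF from_start] by simp
qed

lemma path_connected: "is_path inc P x y \<Longrightarrow> connected inc P"
proof -
  assume "is_path inc P x y"
  then obtain vs es where "chain inc vs es" "verts P = set vs" "edges P = set es"
    unfolding is_path_chain by blast
  then show ?thesis using chain_connected by (metis order_refl)
qed

lemma connected_union:
  assumes "connected inc A" "connected inc B" "c \<in> verts A" "c \<in> verts B"
  shows "connected inc (graph_union A B)"
proof (rule connectedI_hub)
  show "c \<in> verts (graph_union A B)" using assms(3) by simp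
  fix u assume "u \<in> verts (graph_union A B)"
  then consider "u \<in> verts A" | "u \<in> verts B" by auto
  then show "reach inc (graph_union A B) u c"
  proof cases
    case 1
    then have "reach inc A u c" using assms(1,3) unfolding connected_def by blast
    then show ?thesis by (rule reach_mono) simp
  next
    case 2
    then have "reach inc B u c" using assms(2,4) unfolding connected_def by blast
    then show ?thesis by (rule reach_mono) simp
  qed
qed

lemma component_of_connected:
  assumes "connected inc H" "is_graph inc H" "component inc H K"
  shows "K = H"
proof -
  obtain v where v: "v \<in> verts H" "verts K = {u\<in>verts H. reach inc H v u}"
     "edges K = {e\<in>edges H. inc e \<subseteq> verts K}" using assms(3) unfolding component_def by blast
  have "verts K = verts H" using v(1,2) assms(1) unfolding connected_def by auto
  moreover then have "edges K = edges H" using v(3) assms(2) unfolding is_graph_def by auto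
  ultimately show ?thesis by (rule graph_eqI)
qed

lemma rtrancl_leaves_set:
  "(a, b) \<in> r\<^sup>* \<Longrightarrow> a \<in> S \<Longrightarrow> b \<notin> S \<Longrightarrow> \<exists>p q. (p, q) \<in> r \<and> p \<in> S \<and> q \<notin> S"
proof (induction rule: rtrancl_induct)
  case (step y z)
  then show ?case by (cases "y \<in> S") auto
qed simp

section \<open>Cycles\<close>

lemma Suc_mod_eq: "i < n \<Longrightarrow> Suc i mod n = (if Suc i = n then 0 else Suc i)"
  by (simp add: mod_Suc)

lemma Suc_mod_inj: "i < n \<Longrightarrow> k < n \<Longrightarrow> Suc i mod n = Suc k mod n \<Longrightarrow> i = k"
  using Suc_mod_eq[of i n] Suc_mod_eq[of k n] by (auto split: if_splits)

lemma Suc_mod_surj: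
  assumes "j < n"
  obtains p where "p < n" "Suc p mod n = j"
proof
  show "(if j = 0 then n - 1 else j - 1) < n" "Suc (if j = 0 then n - 1 else j - 1) mod n = j"
    using assms Suc_mod_eq[of "n - 1" n] Suc_mod_eq[of "j - 1" n] by auto
qed

lemma cyclic_sequence_degree:
  assumes dv: "distinct vs" and de: "distinct es" and lv: "length vs = n" and le: "length es = n"
    and n2: "2 \<le> n" and ie: "\<And>i. i < n \<Longrightarrow> inc (es ! i) = {vs ! i, vs ! (Suc i mod n)}"
    and v: "v \<in> set vs"
  shows "degree inc (set vs, set es) v = 2"
proof -
  have same_v: "vs ! i = vs ! j \<longleftrightarrow> i = j" if "i < n" "j < n" for i j
    using dv lv that nth_eq_iff_index_eq by blast
  have same_e: "es ! i = es ! j \<longleftrightarrow> i = j" if "i < n" "j < n" for i j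
    using de le that nth_eq_iff_index_eq by blast
  have next_lt: "Suc i mod n < n" for i using n2 by simp
  have no_loop: "\<not> is_loop inc (es ! i)" if "i < n" for i
  proof -
    have "Suc i mod n \<noteq> i" using n2 that Suc_mod_eq by auto
    then show ?thesis unfolding is_loop_def using ie[OF that] same_v[OF that next_lt] by simp
  qed
  obtain j where j: "j < n" "v = vs ! j" using v lv by (auto simp: in_set_conv_nth)
  obtain p where p: "p < n" "Suc p mod n = j" using Suc_mod_surj[OF j(1)] .
  have "p \<noteq> j" using p n2 Suc_mod_eq by (auto split: if_splits)
  have v_ends: "v \<in> inc (es ! i) \<longleftrightarrow> i = j \<or> i = p" if i: "i < n" for i
  proof -
    have "v \<in> inc (es ! i) \<longleftrightarrow> j = i \<or> j = Suc i mod n"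
      using ie[OF i] j same_v[OF j(1) i] same_v[OF j(1) next_lt] by auto
    also have "\<dots> \<longleftrightarrow> i = j \<or> i = p" using Suc_mod_inj[OF i p(1)] p(2) by auto
    finally show ?thesis .
  qed
  have "{e\<in>set es. v \<in> inc e \<and> \<not> is_loop inc e} = {es ! j, es ! p}"
  proof (intro equalityI subsetI)
    fix e assume "e \<in> {e\<in>set es. v \<in> inc e \<and> \<not> is_loop inc e}"
    then obtain i where "i < n" "e = es ! i" "v \<in> inc e" using le by (auto simp: in_set_conv_nth)
    then show "e \<in> {es ! j, es ! p}" using v_ends by auto
  next
    fix e assume "e \<in> {es ! j, es ! p}"
    then show "e \<in> {e\<in>set es. v \<in> inc e \<and> \<not> is_loop inc e}"
      using v_ends[OF j(1)] v_ends[OF p(1)] no_loop j(1) p(1) le by auto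
  qed
  moreover have "inc e \<noteq> {v}" if e: "e \<in> set es" for e
  proof -
    obtain i where "i < n" "e = es ! i" using e le by (auto simp: in_set_conv_nth)
    then show ?thesis using no_loop unfolding is_loop_def by force
  qed
  then have "{e\<in>set es. inc e = {v}} = {}" by blast
  moreover have "es ! j \<noteq> es ! p" using same_e j(1) p(1) \<open>p \<noteq> j\<close> by blast
  ultimately show ?thesis unfolding degree_def by simp
qed

lemma closed_chain_is_cycle:
  assumes ch: "chain inc vs es" and dv: "distinct vs" and de: "distinct (f # es)"
    and f: "inc f = {last vs, hd vs}"
  shows "is_cycle inc (set vs, insert f (set es))"
proof -
  let ?C = "(set vs, insert f (set es))"
  have ends: "hd vs \<in> set vs" "last vs \<in> set vs" using chain_hd_last(1)[OF ch] by simp_all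
  have graph: "is_graph inc ?C"
    using chain_is_graph[OF ch] f ends unfolding is_graph_def by (auto simp: card_insert_if)
  have conn: "connected inc ?C" by (rule chain_connected[OF ch]) auto
  have deg: "degree inc ?C v = 2" if v: "v \<in> set vs" for v
  proof (cases es)
    case Nil
    then obtain w where "vs = [w]" using ch unfolding chain_def by (auto simp: length_Suc_conv)
    then have "{e\<in>edges ?C. v \<in> inc e \<and> \<not> is_loop inc e} = {}" "{e\<in>edges ?C. inc e = {v}} = {f}"
      using v f Nil unfolding is_loop_def by auto
    then show ?thesis unfolding degree_def by simp
  next
    case (Cons e es')
    let ?n = "length vs"
    have n: "?n = Suc (length es)" "2 \<le> ?n" using ch Cons unfolding chain_def by auto
    have "degree inc (set vs, set (es @ [f])) v = 2"
    proof (rule cyclic_sequence_degree[OF dv _ refl _ n(2) _ v])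
      show "distinct (es @ [f])" "length (es @ [f]) = ?n" using de n by auto
      fix i assume i: "i < ?n"
      show "inc ((es @ [f]) ! i) = {vs ! i, vs ! (Suc i mod ?n)}"
      proof (cases "i < length es")
        case True
        then show ?thesis using ch n unfolding chain_def by (auto simp: nth_append)
      next
        case False
        then have "i = length es" using i n by simp
        then show ?thesis using f n chain_hd_last[OF ch] by (simp add: nth_append insert_commute)
      qed
    qed
    then show ?thesis by simp
  qed
  show ?thesis unfolding is_cycle_def using graph conn deg by simp
qed

section \<open>Lollipops\<close>

lemma lollipop_parts:
  assumes "is_lollipop inc P x"
  obtains C Q y where "is_cycle inc C" "is_path inc Q y x" "verts C \<inter> verts Q = {y}"
    "edges C \<inter> edges Q = {}" "P = graph_union C Q"
  using assms unfolding is_lollipop_def by blast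

lemma lollipop_card:
  assumes "is_lollipop inc P x"
  shows "card (edges P) = card (verts P)"
proof -
  obtain C Q y where C: "is_cycle inc C" and Q: "is_path inc Q y x" and V: "verts C \<inter> verts Q = {y}"
    and E: "edges C \<inter> edges Q = {}" and P: "P = graph_union C Q"
    using assms by (rule lollipop_parts)
  have fin: "finite (verts C)" "finite (edges C)" "finite (verts Q)" "finite (edges Q)"
    using C Q unfolding is_cycle_def is_path_def is_graph_def by auto
  have "card (verts P) + 1 = card (verts C) + card (verts Q)"
    using card_Un_Int[OF fin(1,3)] V P by simp
  moreover have "card (edges P) = card (edges C) + card (edges Q)"
    using card_Un_disjoint[OF fin(2,4) E] P by simp
  ultimately show ?thesis using cycle_card[OF C] path_card[OF Q] by simp
qed

lemma lollipop_end_leaf: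
  assumes "is_lollipop inc P x"
  shows "is_leaf inc P x"
proof -
  obtain C Q y where C: "is_cycle inc C" and Q: "is_path inc Q y x" and V: "verts C \<inter> verts Q = {y}"
    and P: "P = graph_union C Q"
    using assms by (rule lollipop_parts)
  have "x \<notin> verts C" using V path_ends[OF Q] by auto
  then have "x \<notin> inc e" if "e \<in> edges C" for e
    using C that unfolding is_cycle_def is_graph_def by auto
  then have "{f \<in> edges P. x \<in> inc f} = {f \<in> edges Q. x \<in> inc f}" using P by auto
  then show ?thesis using path_end_leaf[OF Q] P unfolding is_leaf_def by auto
qed

lemma lollipop_nonpendant:
  assumes "is_lollipop inc P x" "v \<in> verts P" "v \<noteq> x"
  shows "nonpendant inc P v"
proof -
  obtain C Q y where C: "is_cycle inc C" and Q: "is_path inc Q y x" and V: "verts C \<inter> verts Q = {y}"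
    and P: "P = graph_union C Q"
    using assms(1) by (rule lollipop_parts)
  show ?thesis
  proof (cases "v \<in> verts C")
    case True
    then show ?thesis using nonpendant_mono[OF cycle_nonpendant[OF C True]] P by simp
  next
    case False
    then have "v \<in> verts Q" "v \<noteq> y" using assms(2) V P by auto
    then show ?thesis using nonpendant_mono[OF path_inner_nonpendant[OF Q _ _ assms(3)]] P by simp
  qed
qed

lemma lollipop_is_graph:
  assumes "is_lollipop inc P x"
  shows "is_graph inc P"
proof -
  obtain C Q y where "is_cycle inc C" "is_path inc Q y x" "P = graph_union C Q"
    using assms by (rule lollipop_parts)
  then show ?thesis using is_graph_union path_is_graph unfolding is_cycle_def by metis
qed

lemma lollipop_connected:
  assumes "is_lollipop inc P x"
  shows "connected inc P"
proof -
  obtain C Q y where C: "is_cycle inc C" and Q: "is_path inc Q y x" and V: "verts C \<inter> verts Q = {y}"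
    and P: "P = graph_union C Q"
    using assms by (rule lollipop_parts)
  have "connected inc C" using C unfolding is_cycle_def by simp
  moreover have "y \<in> verts C" "y \<in> verts Q" using V by auto
  ultimately show ?thesis using connected_union path_connected[OF Q] P by metis
qed

lemma path_ends_unique:
  assumes "is_path inc P a b" "is_path inc P x y"
  shows "{x, y} = {a, b}"
proof -
  have "z \<in> {a, b}" if z: "z \<in> verts P" "is_leaf inc P z" for z
    using z path_inner_nonpendant[OF assms(1) z(1)] by (metis insertCI nonpendant_not_leaf)
  then have "x \<in> {a, b}" "y \<in> {a, b}"
    using path_ends(2,3)[OF assms(2)] path_start_leaf[OF assms(2)] path_end_leaf[OF assms(2)] by auto
  then show ?thesis using path_ends(1)[OF assms(1)] path_ends(1)[OF assms(2)] by blast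
qed

lemma lollipop_end_unique:
  assumes "is_lollipop inc P x" "is_lollipop inc P y"
  shows "y = x"
proof (rule ccontr)
  assume "y \<noteq> x"
  have "is_leaf inc P y" by (rule lollipop_end_leaf[OF assms(2)])
  moreover then have "nonpendant inc P y"
    using lollipop_nonpendant[OF assms(1) _ \<open>y \<noteq> x\<close>] unfolding is_leaf_def by blast
  ultimately show False by (metis nonpendant_not_leaf)
qed

lemma path_not_cycle: "is_path inc P x y \<Longrightarrow> \<not> is_cycle inc P"
  using path_card cycle_card by (metis add_cancel_left_right one_neq_zero)

lemma path_not_lollipop: "is_path inc P x y \<Longrightarrow> \<not> is_lollipop inc P z"
  using path_card lollipop_card by (metis add_cancel_left_right one_neq_zero)

lemma cycle_not_lollipop:
  assumes "is_cycle inc P"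
  shows "\<not> is_lollipop inc P x"
proof
  assume "is_lollipop inc P x"
  then have "is_leaf inc P x" by (rule lollipop_end_leaf)
  moreover then have "nonpendant inc P x"
    using cycle_nonpendant[OF assms] unfolding is_leaf_def by blast
  ultimately show False by (metis nonpendant_not_leaf)
qed

lemma chord_lollipop:
  assumes ch: "chain inc vs es" and dv: "distinct vs" and de: "distinct (f # es)"
    and j: "j < length es" and f: "inc f = {hd vs, vs ! j}"
  shows "is_lollipop inc (set vs, insert f (set es)) (last vs)"
  unfolding is_lollipop_def
proof (intro exI conjI)
  let ?C = "(set (take (Suc j) vs), insert f (set (take j es)))"
  let ?Q = "(set (drop j vs), set (drop j es))"
  have len: "length vs = Suc (length es)" using ch unfolding chain_def by simp
  have chC: "chain inc (take (Suc j) vs) (take j es)" using chain_take[OF ch] j by simp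
  show "is_cycle inc ?C"
  proof (rule closed_chain_is_cycle[OF chC])
    show "distinct (take (Suc j) vs)" "distinct (f # take j es)"
      using dv de by (auto dest: in_set_takeD)
    have "last (take (Suc j) vs) = vs ! j" using j len by (simp add: take_Suc_conv_app_nth)
    then show "inc f = {last (take (Suc j) vs), hd (take (Suc j) vs)}"
      using f by (simp add: insert_commute)
  qed
  have chQ: "chain inc (drop j vs) (drop j es)" using chain_drop[OF ch] j by simp
  have "is_path inc ?Q (hd (drop j vs)) (last (drop j vs))"
    by (rule chain_is_path[OF chQ]) (use dv de j in auto)
  then show "is_path inc ?Q (vs ! j) (last vs)"
    using j len by (simp add: hd_drop_conv_nth)
  have take_j: "take (Suc j) vs = take j vs @ [vs ! j]"
    and drop_j: "drop j vs = vs ! j # drop (Suc j) vs"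
    using j len by (simp_all add: take_Suc_conv_app_nth Cons_nth_drop_Suc)
  have "distinct (take j vs @ drop j vs)" using dv by simp
  then show "verts ?C \<inter> verts ?Q = {vs ! j}" unfolding take_j drop_j by auto
  show "edges ?C \<inter> edges ?Q = {}"
    using de by (auto dest: in_set_dropD simp: set_take_disj_set_drop_if_distinct)
  have "set vs = set (take j vs) \<union> set (drop j vs)" by (metis append_take_drop_id set_append)
  then have "set vs = set (take (Suc j) vs) \<union> set (drop j vs)" unfolding take_j drop_j by auto
  moreover have "set es = set (take j es) \<union> set (drop j es)" by (metis append_take_drop_id set_append)
  ultimately show "(set vs, insert f (set es)) = graph_union ?C ?Q"
    by (intro graph_eqI) auto
qed

section \<open>Ears\<close>

definition ear :: "('e \<Rightarrow> 'v set) \<Rightarrow> ('v,'e) graph \<Rightarrow> ('v,'e) graph \<Rightarrow> ('v,'e) graph \<Rightarrow> bool" where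
  "ear inc G H P \<longleftrightarrow> subgraph inc P G \<and> edges P \<inter> edges H = {} \<and>
     ((\<exists>a b. is_path inc P a b \<and> verts H \<inter> verts P = {a, b}) \<or>
      (is_cycle inc P \<and> card (verts H \<inter> verts P) = 1) \<or>
      (\<exists>x. is_lollipop inc P x \<and> verts H \<inter> verts P = {x}))"

lemma ear_shapeE:
  assumes "ear inc G H P"
  obtains (path) a b where "is_path inc P a b" "verts H \<inter> verts P = {a, b}"
    | (cycle) "is_cycle inc P" "card (verts H \<inter> verts P) = 1"
    | (lollipop) x where "is_lollipop inc P x" "verts H \<inter> verts P = {x}"
  using assms unfolding ear_def by blast

text \<open>The ends of a path or lollipop, and its shape, are determined by the graph itself; hence the
  attachment conditions hold for every way of reading an ear as a path, cycle or lollipop.\<close>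

lemma ear_attachment:
  assumes "ear inc G H P"
  shows "(is_path_graph inc P \<or> is_cycle inc P \<or> is_lollipop_graph inc P) \<and>
    (\<forall>x y. is_path inc P x y \<longrightarrow> verts H \<inter> verts P = {x, y}) \<and>
    (\<forall>x. is_lollipop inc P x \<longrightarrow> verts H \<inter> verts P = {x}) \<and>
    (is_cycle inc P \<longrightarrow> card (verts H \<inter> verts P) = 1)"
  using assms
proof (cases rule: ear_shapeE)
  case (path a b)
  have "is_path_graph inc P" using path(1) unfolding is_path_graph_def by blast
  moreover have "\<not> is_cycle inc P" "\<forall>x. \<not> is_lollipop inc P x"
    using path_not_cycle[OF path(1)] path_not_lollipop[OF path(1)] by auto
  ultimately show ?thesis using path_ends_unique[OF path(1)] path(2) by simp
next
  case cycle
  have "\<not> is_path inc P x y" for x y using path_not_cycle[of inc P x y] cycle(1) by blast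
  then show ?thesis using cycle cycle_not_lollipop[OF cycle(1)] by simp
next
  case (lollipop x)
  have "is_lollipop_graph inc P" using lollipop(1) unfolding is_lollipop_graph_def by blast
  moreover have "\<not> is_path inc P y z" for y z using path_not_lollipop[of inc P y z] lollipop(1) by blast
  moreover have "\<not> is_cycle inc P" using cycle_not_lollipop[of inc P] lollipop(1) by blast
  ultimately show ?thesis using lollipop_end_unique[OF lollipop(1)] lollipop(2) by simp
qed

lemma ear_card:
  assumes "ear inc G H P"
  shows "card (edges P) + card (verts H \<inter> verts P) = card (verts P) + 1"
  using assms
proof (cases rule: ear_shapeE)
  case (path a b)
  then show ?thesis using path_card[OF path(1)] path_ends(1)[OF path(1)] by simp
qed (simp_all add: cycle_card lollipop_card)

lemma ear_attached:
  assumes "ear inc G H P"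
  shows "verts H \<inter> verts P \<noteq> {}"
  using assms by (cases rule: ear_shapeE) auto

lemma ear_edges_nonempty:
  assumes "ear inc G H P"
  shows "edges P \<noteq> {}"
proof -
  have "finite (verts P)" using assms unfolding ear_def subgraph_def is_graph_def by simp
  then have "card (verts H \<inter> verts P) \<le> card (verts P)" by (simp add: card_mono)
  then show ?thesis using ear_card[OF assms] by auto
qed

lemma ear_nonpendant:
  assumes "ear inc G H P" "v \<in> verts P - verts H"
  shows "nonpendant inc P v"
  using assms(1)
proof (cases rule: ear_shapeE)
  case (path a b)
  then show ?thesis using assms(2) path_inner_nonpendant[of inc P a b v] by blast
next
  case cycle
  then show ?thesis using assms(2) cycle_nonpendant[of inc P v] by blast
next
  case (lollipop x)
  then show ?thesis using assms(2) lollipop_nonpendant[of inc P x v] by blast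
qed

lemma ear_connected:
  assumes "ear inc G H P"
  shows "connected inc P"
  using assms
proof (cases rule: ear_shapeE)
  case cycle
  then show ?thesis unfolding is_cycle_def by simp
qed (simp_all add: path_connected lollipop_connected)

definition ear_step ::
  "('e \<Rightarrow> 'v set) \<Rightarrow> ('v,'e) graph \<Rightarrow> ('v,'e) graph \<Rightarrow> ('v,'e) graph \<Rightarrow> ('v,'e) graph \<Rightarrow> bool"
where
  "ear_step inc G H P H' \<longleftrightarrow> subgraph inc P G \<and> H' = graph_union H P \<and> edges P \<inter> edges H = {} \<and>
     (is_path_graph inc P \<or> is_cycle inc P \<or> is_lollipop_graph inc P) \<and>
     (\<forall>x y. is_path inc P x y \<longrightarrow> verts H \<inter> verts P = {x, y}) \<and>
     (\<forall>x. is_lollipop inc P x \<longrightarrow> verts H \<inter> verts P = {x}) \<and>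
     (is_cycle inc P \<longrightarrow> card (verts H \<inter> verts P) = 1) \<and>
     proper_subgraph inc H H' \<and> excess H' - excess H = 1"

lemma excess_nonneg:
  assumes "cactus inc H \<or> is_cycle inc H"
  shows "0 \<le> excess H"
proof -
  have "card (verts H) \<le> card (edges H)"
    using assms
  proof
    assume "cactus inc H"
    then show ?thesis
      using card_verts_le_card_edges[of inc H] cactus_nonpendant[of inc H]
      unfolding cactus_def cacti_graph_def by simp
  qed (simp add: cycle_card)
  then show ?thesis unfolding excess_def by simp
qed

lemma excess_add_ear:
  assumes "is_graph inc H" "ear inc G H P"
  shows "excess (graph_union H P) = excess H + 1"
proof -
  have gP: "is_graph inc P" using assms(2) unfolding ear_def subgraph_def by simp
  have fin: "finite (verts H)" "finite (edges H)" "finite (verts P)" "finite (edges P)"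
    using assms(1) gP unfolding is_graph_def by auto
  have "card (verts (graph_union H P)) + card (verts H \<inter> verts P) = card (verts H) + card (verts P)"
    using card_Un_Int[OF fin(1,3)] by simp
  moreover have "card (edges (graph_union H P)) = card (edges H) + card (edges P)"
    using card_Un_disjoint[OF fin(2,4)] assms(2) unfolding ear_def by (simp add: Int_commute)
  ultimately show ?thesis using ear_card[OF assms(2)] unfolding excess_def by simp
qed

lemma add_ear:
  assumes sH: "subgraph inc H G" and cH: "connected inc H" and tH: "cactus inc H \<or> is_cycle inc H"
    and ear: "ear inc G H P"
  shows "ear_step inc G H P (graph_union H P)" "cactus inc (graph_union H P)"
    "subgraph inc (graph_union H P) G" "connected inc (graph_union H P)"
proof -
  let ?U = "graph_union H P"
  have sP: "subgraph inc P G" and disj: "edges P \<inter> edges H = {}" using ear unfolding ear_def by auto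
  have gH: "is_graph inc H" and gP: "is_graph inc P" using sH sP unfolding subgraph_def by auto
  have gU: "is_graph inc ?U" by (rule is_graph_union[OF gH gP])
  show sU: "subgraph inc ?U G" using sH sP gU unfolding subgraph_def by auto
  have exc: "excess ?U = excess H + 1" by (rule excess_add_ear[OF gH ear])
  then have "?U \<noteq> H" by auto
  then have psub: "proper_subgraph inc H ?U" using gH gU unfolding proper_subgraph_def subgraph_def by auto
  show "ear_step inc G H P ?U"
    unfolding ear_step_def using sP disj ear_attachment[OF ear] psub exc by simp
  obtain c where "c \<in> verts H" "c \<in> verts P" using ear_attached[OF ear] by blast
  then show connU: "connected inc ?U" by (rule connected_union[OF cH ear_connected[OF ear]])
  have np: "nonpendant inc ?U v" if "v \<in> verts ?U" for v
  proof (cases "v \<in> verts H")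
    case True
    have "nonpendant inc H v"
      using tH True cactus_nonpendant[of inc H v] cycle_nonpendant[of inc H v] by auto
    then show ?thesis by (rule nonpendant_mono) simp
  next
    case False
    then have "nonpendant inc P v" using that ear_nonpendant[OF ear] by simp
    then show ?thesis by (rule nonpendant_mono) simp
  qed
  have "\<not> is_cycle inc ?U"
    using cycle_card[of inc ?U] exc excess_nonneg[OF tH] unfolding excess_def by auto
  then have "\<not> is_cycle inc K" if "component inc ?U K" for K
    using component_of_connected[OF connU gU that] by simp
  moreover have "\<not> isolated inc ?U v" "\<not> is_leaf inc ?U v" if "v \<in> verts ?U" for v
    using np[OF that] nonpendant_iff[OF that] by simp_all
  ultimately show "cactus inc ?U" unfolding cactus_def cacti_graph_def using connU gU by simp
qed

section \<open>Existence of ears\<close>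

lemma earI:
  assumes "is_graph inc G" "is_graph inc P" "verts P \<subseteq> verts G" "edges P \<subseteq> edges G - edges H"
    and "(\<exists>a b. is_path inc P a b \<and> verts H \<inter> verts P = {a, b}) \<or>
      (is_cycle inc P \<and> card (verts H \<inter> verts P) = 1) \<or>
      (\<exists>x. is_lollipop inc P x \<and> verts H \<inter> verts P = {x})"
  shows "ear inc G H P"
  using assms unfolding ear_def subgraph_def by blast

lemma path_ear_of_chain:
  assumes "is_graph inc G" "chain inc vs es" "distinct vs" "distinct es" "es \<noteq> []"
    "set vs \<subseteq> verts G" "set es \<subseteq> edges G - edges H" "verts H \<inter> set vs = {hd vs, last vs}"
  shows "ear inc G H (set vs, set es)"
proof -
  have "is_path inc (set vs, set es) (hd vs) (last vs)" by (rule chain_is_path[OF assms(2-5)])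
  then show ?thesis using assms(1,6-8) path_is_graph by (intro earI) auto
qed

lemma cycle_ear_of_chain:
  assumes "is_graph inc G" "chain inc vs es" "distinct vs" "distinct (f # es)"
    "inc f = {last vs, hd vs}" "set vs \<subseteq> verts G" "insert f (set es) \<subseteq> edges G - edges H"
    "verts H \<inter> set vs = {last vs}"
  shows "ear inc G H (set vs, insert f (set es))"
proof -
  have "is_cycle inc (set vs, insert f (set es))" by (rule closed_chain_is_cycle[OF assms(2-5)])
  then show ?thesis using assms(1,6-8) by (intro earI) (auto simp: is_cycle_def)
qed

lemma lollipop_ear_of_chain:
  assumes "is_graph inc G" "chain inc vs es" "distinct vs" "distinct (f # es)" "j < length es"
    "inc f = {hd vs, vs ! j}" "set vs \<subseteq> verts G" "insert f (set es) \<subseteq> edges G - edges H"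
    "verts H \<inter> set vs = {last vs}"
  shows "ear inc G H (set vs, insert f (set es))"
proof -
  have "is_lollipop inc (set vs, insert f (set es)) (last vs)" by (rule chord_lollipop[OF assms(2-6)])
  then show ?thesis using assms(1,7-9) lollipop_is_graph by (intro earI) auto
qed

lemma walk_continues:
  assumes gG: "is_graph inc G" and cG: "cactus inc G" and sH: "subgraph inc H G"
    and ch: "chain inc vs es" and dv: "distinct vs" and de: "distinct es" and ne: "es \<noteq> []"
    and vsG: "set vs \<subseteq> verts G" and esG: "set es \<subseteq> edges G" and att: "verts H \<inter> set vs = {last vs}"
  obtains f t where "f \<in> edges G - edges H" "f \<notin> set es" "inc f = {hd vs, t}"
proof -
  let ?w = "hd vs"
  have w0: "?w = vs ! 0" and wG: "?w \<in> verts G" using chain_hd_last[OF ch] vsG by auto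
  have "?w \<noteq> last vs" using path_ends(1)[OF chain_is_path[OF ch dv de ne]] .
  then have wH: "?w \<notin> verts H" using att hd_in_set[OF chain_hd_last(1)[OF ch]] by blast
  have "es ! 0 \<in> set es" using ne by simp
  then have "es ! 0 \<in> edges G" using esG by blast
  moreover have "?w \<in> inc (es ! 0)" "\<not> is_loop inc (es ! 0)"
    using ne ch w0 nth_eq_iff_index_eq[OF dv, of 0 1]
    unfolding chain_def is_loop_def by (auto simp: card_insert_if)
  ultimately obtain f where f: "f \<in> edges G" "f \<noteq> es ! 0" "?w \<in> inc f"
    using nonpendant_other_edge[OF cactus_nonpendant[OF cG wG]] by metis
  have "f \<notin> edges H" using sH wH f(3) unfolding subgraph_def is_graph_def by blast
  moreover have "f \<notin> set es"
  proof
    assume "f \<in> set es"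
    then obtain i where "i < length es" "f = es ! i" by (auto simp: in_set_conv_nth)
    then show False using chain_start_edge[OF ch dv] f(2,3) w0 by auto
  qed
  moreover obtain t where "inc f = {?w, t}" using incidence_two_ends[OF gG f(1,3)] .
  ultimately show thesis using that f(1) by blast
qed

text \<open>The walk is a chain whose head is its free end and whose last vertex is its only vertex in H.\<close>

lemma ear_from_walk:
  assumes gG: "is_graph inc G" and cG: "cactus inc G" and sH: "subgraph inc H G"
  shows "chain inc vs es \<Longrightarrow> distinct vs \<Longrightarrow> distinct es \<Longrightarrow> es \<noteq> [] \<Longrightarrow> set vs \<subseteq> verts G \<Longrightarrow>
    set es \<subseteq> edges G - edges H \<Longrightarrow> verts H \<inter> set vs = {last vs} \<Longrightarrow> \<exists>P. ear inc G H P"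
proof (induction "card (verts G) - length vs" arbitrary: vs es rule: less_induct)
  case less
  note ch = less.prems(1) and dv = less.prems(2) and de = less.prems(3)
    and vsG = less.prems(5) and esG = less.prems(6) and att = less.prems(7)
  obtain f t where f: "f \<in> edges G - edges H" "f \<notin> set es" and t: "inc f = {hd vs, t}"
    using walk_continues[OF gG cG sH less.prems(1-5)] esG att by blast
  have tG: "t \<in> verts G" using gG f(1) t unfolding is_graph_def by auto
  have de': "distinct (f # es)" using de f(2) by simp
  have fes: "insert f (set es) \<subseteq> edges G - edges H" using f(1) esG by blast
  have ch': "chain inc (t # vs) (f # es)" using chain_Cons[OF ch] t by (simp add: insert_commute)
  consider (closing) "t = last vs" | (chord) j where "j < length es" "t = vs ! j"
    | (exit) "t \<notin> set vs" "t \<in> verts H" | (extend) "t \<notin> set vs" "t \<notin> verts H"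
    using ch chain_hd_last(3)[OF ch] unfolding chain_def by (metis in_set_conv_nth less_Suc_eq)
  then show ?case
  proof cases
    case closing
    then show ?thesis using cycle_ear_of_chain[OF gG ch dv de' _ vsG fes att] t
      by (metis insert_commute)
  next
    case (chord j)
    then show ?thesis using lollipop_ear_of_chain[OF gG ch dv de' chord(1) _ vsG fes att] t by metis
  next
    case exit
    have "verts H \<inter> set (t # vs) = {hd (t # vs), last (t # vs)}"
      using att exit chain_hd_last(1)[OF ch] by auto
    then have "ear inc G H (set (t # vs), set (f # es))"
      using path_ear_of_chain[OF gG ch', of H] dv exit(1) de' vsG tG fes by simp
    then show ?thesis by blast
  next
    case extend
    have "card (set (t # vs)) \<le> card (verts G)"
      using vsG tG gG unfolding is_graph_def by (intro card_mono) auto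
    then have "card (verts G) - length (t # vs) < card (verts G) - length vs"
      using dv extend(1) by (simp add: distinct_card)
    moreover have "verts H \<inter> set (t # vs) = {last (t # vs)}"
      using att extend chain_hd_last(1)[OF ch] by auto
    ultimately show ?thesis using less.hyps[of "t # vs" "f # es"] ch' dv extend(1) de' vsG tG fes by simp
  qed
qed

lemma ear_of_inner_edge:
  assumes gG: "is_graph inc G" and sH: "subgraph inc H G"
    and e: "e \<in> edges G - edges H" "inc e \<subseteq> verts H"
  obtains P where "ear inc G H P"
proof -
  have "card (inc e) = 1 \<or> card (inc e) = 2" using gG e(1) unfolding is_graph_def by auto
  then obtain a where "a \<in> inc e" by (metis card.empty ex_in_conv zero_neq_numeral zero_neq_one)
  then obtain b where ab: "inc e = {a, b}" using incidence_two_ends[OF gG] e(1) by blast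
  have abH: "a \<in> verts H" "b \<in> verts H" using e ab by auto
  then have abG: "a \<in> verts G" "b \<in> verts G" using sH unfolding subgraph_def by auto
  show thesis
  proof (cases "a = b")
    case True
    then show thesis
      using cycle_ear_of_chain[OF gG, of "[a]" "[]" e H] ab abH abG e(1) that by (simp add: chain_def)
  next
    case False
    then show thesis
      using path_ear_of_chain[OF gG, of "[a, b]" "[e]" H] ab abH abG e(1) that by (auto simp: chain_def)
  qed
qed

lemma edge_leaving:
  assumes "connected inc G" "subgraph inc H G" "a \<in> verts H" "b \<in> verts G - verts H"
  obtains e p q where "e \<in> edges G" "inc e = {q, p}" "p \<in> verts H" "q \<notin> verts H"
proof -
  have "reach inc G a b" using assms unfolding connected_def subgraph_def by blast
  then obtain p q where "(p, q) \<in> adj inc G" "p \<in> verts H" "q \<notin> verts H"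
    using rtrancl_leaves_set[of a b _ "verts H"] assms(3,4) unfolding reach_def by blast
  then show thesis using that unfolding adj_def by (auto simp: insert_commute)
qed

lemma find_ear:
  assumes gG: "is_graph inc G" and cG: "cactus inc G" and sH: "subgraph inc H G"
    and cH: "connected inc H" and HG: "H \<noteq> G"
  obtains P where "ear inc G H P"
proof (cases "\<exists>e\<in>edges G - edges H. inc e \<subseteq> verts H")
  case True
  then show thesis using ear_of_inner_edge[OF gG sH] that by blast
next
  case False
  have gH: "is_graph inc H" using sH unfolding subgraph_def by simp
  have "verts H \<noteq> verts G"
  proof
    assume VV: "verts H = verts G"
    then have "edges H \<noteq> edges G" using HG graph_eqI by metis
    then obtain e where "e \<in> edges G" "e \<notin> edges H" using sH unfolding subgraph_def by blast
    then show False using False VV gG unfolding is_graph_def by blast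
  qed
  then obtain a b where "a \<in> verts H" "b \<in> verts G - verts H"
    using sH cH unfolding subgraph_def connected_def by blast
  then obtain e p q where e: "e \<in> edges G" "inc e = {q, p}" and pq: "p \<in> verts H" "q \<notin> verts H"
    using edge_leaving[OF _ sH] cG unfolding cactus_def by metis
  have "e \<notin> edges H" using gH e pq unfolding is_graph_def by blast
  moreover have "q \<in> verts G" "p \<in> verts G" using gG e unfolding is_graph_def by auto
  moreover have "chain inc [q, p] [e]" unfolding chain_def using e by simp
  ultimately show thesis
    using ear_from_walk[OF gG cG sH, of "[q, p]" "[e]"] pq e that by auto
qed

lemma ear_decomposition:
  assumes gG: "is_graph inc G" and cG: "cactus inc G"
  shows "subgraph inc H G \<Longrightarrow> connected inc H \<Longrightarrow> cactus inc H \<or> is_cycle inc H \<Longrightarrow>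
    \<exists>Ps Gs. length Gs = Suc (length Ps) \<and> Gs ! 0 = H \<and> Gs ! length Ps = G \<and>
      (Ps = [] \<longleftrightarrow> G = H) \<and> (\<forall>i\<le>length Ps. subgraph inc (Gs ! i) G) \<and>
      (\<forall>i<length Ps. cactus inc (Gs ! Suc i) \<and> ear_step inc G (Gs ! i) (Ps ! i) (Gs ! Suc i))"
proof (induction "card (edges G - edges H)" arbitrary: H rule: less_induct)
  case less
  show ?case
  proof (cases "H = G")
    case True
    then show ?thesis using less.prems by (intro exI[of _ "[]"] exI[of _ "[H]"]) auto
  next
    case False
    obtain P where P: "ear inc G H P" using find_ear[OF gG cG less.prems(1,2) False] .
    let ?H' = "graph_union H P"
    note step = add_ear[OF less.prems P]
    have "edges P \<inter> edges H = {}" "edges P \<subseteq> edges G"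
      using P unfolding ear_def subgraph_def by auto
    then have "edges G - edges ?H' \<subset> edges G - edges H" using ear_edges_nonempty[OF P] by auto
    then have lt: "card (edges G - edges ?H') < card (edges G - edges H)"
      using gG unfolding is_graph_def by (intro psubset_card_mono) auto
    then obtain Ps Gs where IH: "length Gs = Suc (length Ps)" "Gs ! 0 = ?H'" "Gs ! length Ps = G"
      "\<forall>i\<le>length Ps. subgraph inc (Gs ! i) G"
      "\<forall>i<length Ps. cactus inc (Gs ! Suc i) \<and> ear_step inc G (Gs ! i) (Ps ! i) (Gs ! Suc i)"
      using less.hyps[OF lt step(3) step(4)] step(2) by blast
    have "cactus inc ((H # Gs) ! Suc i) \<and> ear_step inc G ((H # Gs) ! i) ((P # Ps) ! i) ((H # Gs) ! Suc i)"
      if "i < length (P # Ps)" for i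
      using that IH(2,5) step(1,2) by (cases i) auto
    moreover have "subgraph inc ((H # Gs) ! i) G" if "i \<le> length (P # Ps)" for i
      using that IH(4) less.prems(1) by (cases i) auto
    ultimately show ?thesis using IH(1-3) False by (intro exI[of _ "P # Ps"] exI[of _ "H # Gs"]) simp
  qed
qed

theorem mainTheorem3:
  fixes inc :: "'e \<Rightarrow> 'v set" and G G0 :: "('v,'e) graph"
  assumes "is_graph inc G" and "connected inc G" and "cactus inc G"
    and "subgraph inc G0 G" and "connected inc G0"
    and "cactus inc G0 \<or> is_cycle inc G0"
  shows "\<exists>r Ps Gs. length Ps = r \<and> length Gs = Suc r \<and> Gs ! 0 = G0 \<and> Gs ! r = G \<and>
     (r = 0 \<longleftrightarrow> G = G0) \<and>
     (\<forall>i\<le>r. subgraph inc (Gs ! i) G) \<and>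
     (\<forall>i\<in>{1..r}. cactus inc (Gs ! i)) \<and>
     (\<forall>i\<in>{1..r}.
        subgraph inc (Ps ! (i - 1)) G \<and>
        Gs ! i = graph_union (Gs ! (i - 1)) (Ps ! (i - 1)) \<and>
        edges (Ps ! (i - 1)) \<inter> edges (Gs ! (i - 1)) = {} \<and>
        (is_path_graph inc (Ps ! (i - 1)) \<or> is_cycle inc (Ps ! (i - 1)) \<or>
           is_lollipop_graph inc (Ps ! (i - 1))) \<and>
        (\<forall>x y. is_path inc (Ps ! (i - 1)) x y \<longrightarrow>
            verts (Gs ! (i - 1)) \<inter> verts (Ps ! (i - 1)) = {x, y}) \<and>
        (\<forall>x. is_lollipop inc (Ps ! (i - 1)) x \<longrightarrow>
            verts (Gs ! (i - 1)) \<inter> verts (Ps ! (i - 1)) = {x}) \<and>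
        (is_cycle inc (Ps ! (i - 1)) \<longrightarrow>
            card (verts (Gs ! (i - 1)) \<inter> verts (Ps ! (i - 1))) = 1) \<and>
        proper_subgraph inc (Gs ! (i - 1)) (Gs ! i) \<and>
        excess (Gs ! i) - excess (Gs ! (i - 1)) = 1)"
proof -
  obtain Ps Gs where D: "length Gs = Suc (length Ps)" "Gs ! 0 = G0" "Gs ! length Ps = G"
    "Ps = [] \<longleftrightarrow> G = G0" "\<forall>i\<le>length Ps. subgraph inc (Gs ! i) G"
    "\<forall>i<length Ps. cactus inc (Gs ! Suc i) \<and> ear_step inc G (Gs ! i) (Ps ! i) (Gs ! Suc i)"
    using ear_decomposition[OF assms(1,3-6)] by blast \<comment> \<open>connectedness of G is part of being a cactus\<close>
  have step: "cactus inc (Gs ! i) \<and> ear_step inc G (Gs ! (i - 1)) (Ps ! (i - 1)) (Gs ! i)"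
    if "i \<in> {1..length Ps}" for i
  proof -
    have "i - 1 < length Ps" "Suc (i - 1) = i" using that by auto
    then show ?thesis using D(6)[rule_format, of "i - 1"] by simp
  qed
  show ?thesis
    unfolding ear_step_def[symmetric]
    using D(1-5) step by (intro exI[of _ "length Ps"] exI[of _ Ps] exI[of _ Gs]) auto
qed

end
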